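(* Let $(\mathbf{i},\kappa)$ be an idempotent datum as in the context. Then $(\mathbf{i},\kappa)$ admits a compatible metric longitude if and only if it is a parity idempotent datum.
   Context: $I$ is the vertex set of a finite simple bipartite graph, $I=I_{\bar0}\sqcup I_{\bar1}$; an integer $k$ has the parity of $i$ if $k\bmod2$ equals the parity of $i$. Fix a total order $v_1<\dots<v_r$ on $I$ with all even vertices first. Let $\mathbf{R}=(R_i)_{i\in I}$ where $R_i$ is a finite multiset of integers of the parity of $i$ ($\lambda_i=|R_i|$, $\ell=\sum_i\lambda_i$). With $\rho_i(q)$ the multiplicity of $2q$ (i even) or $2q+1$ (i odd) in $R_i$, form the sequence of labels $(j_1,\dots,j_\ell)$ as the concatenation over increasing $q\in\mathbb{Z}$ of blocks ($v_1$ repeated $\rho_{v_1}(q)$ times, …, $v_r$ repeated $\rho_{v_r}(q)$ times); the $p$-th red strand has label $j_p$ and longitude $r_p$, the corresponding element of $R_{j_p}$ (so $r_1\le\dots\le r_\ell$). An idempotent datum is $(\mathbf{i},\kappa)$ with $\mathbf{i}=(i_1,\dots,i_n)\in I^n$ (labels of black strands) and $\kappa:\{1,\dots,\ell\}\to\{0,\dots,n\}$ weakly increasing; it describes a left-to-right sequence of strands in which red strand $p$ lies between the $\kappa(p)$-th and $(\kappa(p)+1)$-st black strands. Each strand has the parity of its label. Parity distance: for consecutive strands $s$ left of $s'$, $\delta(s,s')=2$ if $s$ is black, $s'$ is red and they have the same parity; $1$ if they have different parities; $0$ otherwise; for $s$ left of $s'$ non-consecutive, $\delta(s,s')$ is the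 sum over consecutive pairs between them. $(\mathbf{i},\kappa)$ is parity if $\delta(p,p')\le|r_p-r_{p'}|$ for every pair of red strands $p$ left of $p'$. A compatible metric longitude is $\mathbf{a}=(a_1,\dots,a_n)\in\mathbb{Z}^n$ with (1) $a_k$ of the parity of $i_k$, (2) $a_k\le a_{k+1}$, (3) for all $k,p$: $a_k\ge r_p$ if and only if $k>\kappa(p)$. *)

theory Defs
  imports Main "HOL-Library.Multiset"
begin

text \<open>Vertex parity is given by a predicate par :: 'v => bool, par v = True meaning v is odd.
  An integer x has the parity of v iff (odd x = par v).\<close>

definition par_int :: "bool \<Rightarrow> int" where
  "par_int b = (if b then 1 else 0)"

text \<open>The range [-N..N] of q covers every q with a nonempty block.\<close>
definition red_list :: "('v \<Rightarrow> bool) \<Rightarrow> 'v list \<Rightarrow> ('v \<Rightarrow> int multiset) \<Rightarrow> ('v \<times> int) list" where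
  "red_list par vs R =
     (let N = sum_list (map (\<lambda>v. sum_mset (image_mset abs (R v))) vs) in
      concat (map (\<lambda>q. concat (map (\<lambda>v.
          replicate (count (R v) (2 * q + par_int (par v))) (v, 2 * q + par_int (par v))) vs))
        [-N..N]))"

text \<open>Label j_p and longitude r_p of the p-th red strand (1-based).\<close>
definition red_lab :: "('v \<Rightarrow> bool) \<Rightarrow> 'v list \<Rightarrow> ('v \<Rightarrow> int multiset) \<Rightarrow> nat \<Rightarrow> 'v" where
  "red_lab par vs R p = fst (red_list par vs R ! (p - 1))"

definition red_lon :: "('v \<Rightarrow> bool) \<Rightarrow> 'v list \<Rightarrow> ('v \<Rightarrow> int multiset) \<Rightarrow> nat \<Rightarrow> int" where
  "red_lon par vs R p = snd (red_list par vs R ! (p - 1))"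

definition ell :: "'v set \<Rightarrow> ('v \<Rightarrow> int multiset) \<Rightarrow> nat" where
  "ell I R = (\<Sum>v\<in>I. size (R v))"

datatype strand = Blk nat | Rd nat

text \<open>Left-to-right sequence of strands: red strand p lies between the kappa(p)-th and
  (kappa(p)+1)-st black strands (black strands numbered 1..n).\<close>
definition strand_seq :: "nat \<Rightarrow> nat \<Rightarrow> (nat \<Rightarrow> nat) \<Rightarrow> strand list" where
  "strand_seq n l \<kappa> =
     concat (map (\<lambda>k. map Rd (filter (\<lambda>p. \<kappa> p = k) [1..<l+1]) @ (if k < n then [Blk (k+1)] else []))
       [0..<n+1])"

definition strand_par :: "('v \<Rightarrow> bool) \<Rightarrow> 'v list \<Rightarrow> (nat \<Rightarrow> 'v) \<Rightarrow> strand \<Rightarrow> bool" where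
  "strand_par par is lab s = (case s of Blk k \<Rightarrow> par (is ! (k - 1)) | Rd p \<Rightarrow> par (lab p))"

definition delta_consec :: "('v \<Rightarrow> bool) \<Rightarrow> 'v list \<Rightarrow> (nat \<Rightarrow> 'v) \<Rightarrow> strand \<Rightarrow> strand \<Rightarrow> nat" where
  "delta_consec par is lab s s' =
     (if (\<exists>k. s = Blk k) \<and> (\<exists>p. s' = Rd p) \<and> strand_par par is lab s = strand_par par is lab s' then 2
      else if strand_par par is lab s \<noteq> strand_par par is lab s' then 1 else 0)"

definition strand_pos :: "strand list \<Rightarrow> strand \<Rightarrow> nat" where
  "strand_pos sq s = (LEAST a. a < length sq \<and> sq ! a = s)"

definition delta_red :: "('v \<Rightarrow> bool) \<Rightarrow> 'v list \<Rightarrow> (nat \<Rightarrow> 'v) \<Rightarrow> strand list \<Rightarrow> nat \<Rightarrow> nat \<Rightarrow> nat" where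
  "delta_red par is lab sq p p' =
     (\<Sum>a\<in>{strand_pos sq (Rd p)..<strand_pos sq (Rd p')}. delta_consec par is lab (sq ! a) (sq ! (a+1)))"

definition is_parity_datum ::
  "'v set \<Rightarrow> ('v \<Rightarrow> bool) \<Rightarrow> 'v list \<Rightarrow> ('v \<Rightarrow> int multiset) \<Rightarrow> 'v list \<Rightarrow> (nat \<Rightarrow> nat) \<Rightarrow> bool" where
  "is_parity_datum I par vs R is \<kappa> =
     (\<forall>p p'. 1 \<le> p \<and> p < p' \<and> p' \<le> ell I R \<longrightarrow>
        int (delta_red par is (red_lab par vs R) (strand_seq (length is) (ell I R) \<kappa>) p p')
          \<le> \<bar>red_lon par vs R p - red_lon par vs R p'\<bar>)"

text \<open>Compatible metric longitude a = (a_1..a_n), stored 0-based as a list (a ! (k-1) = a_k).\<close>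
definition compatible_longitude ::
  "'v set \<Rightarrow> ('v \<Rightarrow> bool) \<Rightarrow> 'v list \<Rightarrow> ('v \<Rightarrow> int multiset) \<Rightarrow> 'v list \<Rightarrow> (nat \<Rightarrow> nat) \<Rightarrow> int list \<Rightarrow> bool" where
  "compatible_longitude I par vs R is \<kappa> a =
     (length a = length is \<and>
      (\<forall>k < length is. odd (a ! k) = par (is ! k)) \<and>
      (\<forall>k. k + 1 < length is \<longrightarrow> a ! k \<le> a ! (k+1)) \<and>
      (\<forall>k p. 1 \<le> k \<and> k \<le> length is \<and> 1 \<le> p \<and> p \<le> ell I R \<longrightarrow>
          (a ! (k-1) \<ge> red_lon par vs R p \<longleftrightarrow> k > \<kappa> p)))"

end

(*
  List all strands of the datum from left to right and give each one a longitude: a_k to the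
  k-th black strand and r_p to the red strand p.  The conditions on a compatible metric longitude
  say that along this list the longitudes have the parities of their strands, increase weakly, and
  increase strictly from a black strand to a red one.  For integers of prescribed parities this is
  the same as asking that every step increases the longitude by at least the parity distance of
  the two consecutive strands.  So compatible longitudes are exactly the potentials on positions
  whose increments dominate these distances and whose values at the red positions are the r_p.

  Telescoping shows that such a potential forces delta(p, p') <= r_p' - r_p, which is the parity
  condition since r is sorted.  Conversely, if these bounds hold, the longest-path potential
  f(x) = max (r_i + delta(i, x)) over the red positions i <= x (together with one artificial,
  very low pin at the first position) takes the value r_j at every red position j, and it has
  the right parities because delta(i, x) is odd exactly when the parity changes between i and x.
*)
theory Submission
  imports Defs
begin

section \<open>Potentials with prescribed values\<close>

definition pinned_potential :: "nat \<Rightarrow> (nat \<Rightarrow> nat) \<Rightarrow> (nat \<Rightarrow> bool) \<Rightarrow> nat set \<Rightarrow>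
    (nat \<Rightarrow> int) \<Rightarrow> (nat \<Rightarrow> int) \<Rightarrow> bool" where
  "pinned_potential L w \<pi> P c f \<longleftrightarrow>
     (\<forall>x. Suc x < L \<longrightarrow> f x + int (w x) \<le> f (Suc x)) \<and> (\<forall>i\<in>P. f i = c i) \<and>
     (\<forall>x<L. odd (f x) = \<pi> x)"

definition feasible_pins :: "(nat \<Rightarrow> nat) \<Rightarrow> nat set \<Rightarrow> (nat \<Rightarrow> int) \<Rightarrow> bool" where
  "feasible_pins w P c \<longleftrightarrow> (\<forall>i\<in>P. \<forall>j\<in>P. i < j \<longrightarrow> c i + int (sum w {i..<j}) \<le> c j)"

lemma sum_le_of_increments:
  fixes f :: "nat \<Rightarrow> int"
  assumes "\<And>x. i \<le> x \<Longrightarrow> x < j \<Longrightarrow> f x + int (w x) \<le> f (Suc x)" and "i \<le> j"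
  shows "f i + int (sum w {i..<j}) \<le> f j"
proof -
  have "int (sum w {i..<j}) = (\<Sum>x=i..<j. int (w x))" by simp
  also have "\<dots> \<le> (\<Sum>x=i..<j. f (Suc x) - f x)" using assms(1) by (intro sum_mono) force
  also have "\<dots> = f j - f i" using assms(2) by (rule sum_Suc_diff')
  finally show ?thesis by simp
qed

lemma odd_sum_iff_parity_change:
  fixes \<pi> :: "nat \<Rightarrow> bool"
  assumes "\<And>x. i \<le> x \<Longrightarrow> x < j \<Longrightarrow> odd (w x :: nat) \<longleftrightarrow> \<pi> x \<noteq> \<pi> (Suc x)" and "i \<le> j"
  shows "odd (sum w {i..<j}) \<longleftrightarrow> \<pi> i \<noteq> \<pi> j"
  using assms
proof (induction j)
  case (Suc j)
  show ?case
  proof (cases "i = Suc j")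
    case False
    then have "i \<le> j" using Suc.prems(2) by simp
    then show ?thesis using Suc by (auto simp: sum.atLeastLessThan_Suc)
  qed simp
qed simp

lemma pinned_potential_exists_if_pinned_at_0:
  assumes "0 \<in> P" "finite P"
    and w_parity: "\<And>x. Suc x < L \<Longrightarrow> odd (w x) \<longleftrightarrow> \<pi> x \<noteq> \<pi> (Suc x)"
    and c_parity: "\<And>i. i \<in> P \<Longrightarrow> odd (c i) = \<pi> i"
    and feasible: "\<And>i j. i \<in> P \<Longrightarrow> j \<in> P \<Longrightarrow> i < j \<Longrightarrow> c i + int (sum w {i..<j}) \<le> c j"
  shows "\<exists>f. pinned_potential L w \<pi> P c f"
proof -
  define S where "S x = (\<lambda>i. c i + int (sum w {i..<x})) ` {i\<in>P. i \<le> x}" for x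
  define f where "f x = Max (S x)" for x
  have S_finite: "finite (S x)" for x
    unfolding S_def using \<open>finite P\<close> by simp
  have f_in: "f x \<in> S x" for x
    unfolding f_def using S_finite by (rule Max_in) (use \<open>0 \<in> P\<close> in \<open>auto simp: S_def\<close>)
  have f_ge: "e \<le> f x" if "e \<in> S x" for e x
    unfolding f_def using S_finite that by simp
  have "f x + int (w x) \<le> f (Suc x)" for x
  proof -
    obtain i where "i \<in> P" "i \<le> x" "f x = c i + int (sum w {i..<x})"
      using f_in[of x] by (auto simp: S_def)
    then have "f x + int (w x) \<in> S (Suc x)"
      unfolding S_def by (intro image_eqI[of _ _ i]) auto
    then show ?thesis by (rule f_ge)
  qed
  moreover have "f j = c j" if "j \<in> P" for j
    unfolding f_def
  proof (rule Max_eqI[OF S_finite])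
    show "c j \<in> S j" unfolding S_def using that by force
    show "e \<le> c j" if "e \<in> S j" for e
      using \<open>e \<in> S j\<close> feasible[OF _ \<open>j \<in> P\<close>] unfolding S_def by (force simp: le_less)
  qed
  moreover have "odd (f x) = \<pi> x" if "x < L" for x
  proof -
    obtain i where "i \<in> P" "i \<le> x" "f x = c i + int (sum w {i..<x})"
      using f_in[of x] by (auto simp: S_def)
    moreover have "odd (sum w {i..<x}) \<longleftrightarrow> \<pi> i \<noteq> \<pi> x"
      using \<open>i \<le> x\<close> \<open>x < L\<close> by (intro odd_sum_iff_parity_change w_parity) auto
    ultimately show ?thesis using c_parity by (auto simp del: of_nat_sum)
  qed
  ultimately show ?thesis unfolding pinned_potential_def by blast
qed

lemma pinned_potential_exists:
  assumes "finite P"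
    and w_parity: "\<And>x. Suc x < L \<Longrightarrow> odd (w x) \<longleftrightarrow> \<pi> x \<noteq> \<pi> (Suc x)"
    and c_parity: "\<And>i. i \<in> P \<Longrightarrow> odd (c i) = \<pi> i"
    and feasible: "\<And>i j. i \<in> P \<Longrightarrow> j \<in> P \<Longrightarrow> i < j \<Longrightarrow> c i + int (sum w {i..<j}) \<le> c j"
  shows "\<exists>f. pinned_potential L w \<pi> P c f"
proof (cases "0 \<in> P")
  case True
  then show ?thesis using assms by (rule pinned_potential_exists_if_pinned_at_0)
next
  case False
  define K where "K = 1 + (\<Sum>i\<in>P. \<bar>c i\<bar> + int (sum w {0..<i}))"
  define c' where "c' = c(0 := par_int (\<pi> 0) - 2 * K)"
  have low_start: "c' 0 + int (sum w {0..<j}) \<le> c j" if "j \<in> P" for j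
  proof -
    have "\<bar>c j\<bar> + int (sum w {0..<j}) \<le> K - 1"
      unfolding K_def using \<open>finite P\<close> that
      by (simp del: of_nat_sum) (rule member_le_sum; simp add: sum_nonneg)
    then show ?thesis by (auto simp del: of_nat_sum simp: c'_def par_int_def)
  qed
  have "c' i + int (sum w {i..<j}) \<le> c' j" if "i \<in> insert 0 P" "j \<in> insert 0 P" "i < j" for i j
    using that low_start[of j] feasible[of i j] False by (cases "i = 0") (auto simp: c'_def)
  moreover have "odd (c' i) = \<pi> i" if "i \<in> insert 0 P" for i
    using that c_parity False by (auto simp: c'_def par_int_def)
  ultimately have "\<exists>f. pinned_potential L w \<pi> (insert 0 P) c' f"
    using \<open>finite P\<close> w_parity by (intro pinned_potential_exists_if_pinned_at_0) auto
  moreover have "pinned_potential L w \<pi> P c f" if "pinned_potential L w \<pi> (insert 0 P) c' f" for f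
    using that False unfolding pinned_potential_def c'_def by auto
  ultimately show ?thesis by blast
qed

lemma pinned_potential_exists_iff:
  assumes "P \<subseteq> {..<L}"
    and "\<And>x. Suc x < L \<Longrightarrow> odd (w x) \<longleftrightarrow> \<pi> x \<noteq> \<pi> (Suc x)"
    and "\<And>i. i \<in> P \<Longrightarrow> odd (c i) = \<pi> i"
  shows "(\<exists>f. pinned_potential L w \<pi> P c f) \<longleftrightarrow> feasible_pins w P c"
proof
  assume "\<exists>f. pinned_potential L w \<pi> P c f"
  then obtain f where f: "pinned_potential L w \<pi> P c f" ..
  show "feasible_pins w P c"
    unfolding feasible_pins_def
  proof (intro ballI impI)
    fix i j assume "i \<in> P" "j \<in> P" "i < j"
    have "f i + int (sum w {i..<j}) \<le> f j"
      using f \<open>j \<in> P\<close> \<open>i < j\<close> assms(1)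
      by (intro sum_le_of_increments) (auto simp: pinned_potential_def)
    then show "c i + int (sum w {i..<j}) \<le> c j"
      using f \<open>i \<in> P\<close> \<open>j \<in> P\<close> by (simp add: pinned_potential_def)
  qed
next
  assume "feasible_pins w P c"
  moreover have "finite P" using assms(1) finite_subset by blast
  ultimately show "\<exists>f. pinned_potential L w \<pi> P c f"
    using assms(2,3) unfolding feasible_pins_def by (intro pinned_potential_exists) auto
qed

section \<open>The strand sequence\<close>

lemma sorted_wrt_concat_map:
  assumes "\<And>x. x \<in> set xs \<Longrightarrow> sorted_wrt P (f x)"
    and "\<And>i j y z. i < j \<Longrightarrow> j < length xs \<Longrightarrow> y \<in> set (f (xs ! i)) \<Longrightarrow> z \<in> set (f (xs ! j))
      \<Longrightarrow> P y z"
  shows "sorted_wrt P (concat (map f xs))"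
  using assms
proof (induction xs)
  case (Cons x xs)
  have "sorted_wrt P (concat (map f xs))"
    using Cons.prems(1) Cons.prems(2)[of "Suc i" "Suc j" for i j] by (intro Cons.IH) auto
  moreover have "P y z" if "y \<in> set (f x)" "z \<in> set (concat (map f xs))" for y z
  proof -
    obtain x' where "x' \<in> set xs" "z \<in> set (f x')"
      using \<open>z \<in> set (concat (map f xs))\<close> by auto
    then obtain j where "j < length xs" "z \<in> set (f (xs ! j))"
      by (metis in_set_conv_nth)
    then show "P y z" using Cons.prems(2)[of 0 "Suc j"] \<open>y \<in> set (f x)\<close> by simp
  qed
  ultimately show ?case using Cons.prems(1) by (simp add: sorted_wrt_append)
qed simp

lemma sorted_wrt_irrefl_imp_distinct:
  assumes "sorted_wrt P xs" "\<And>x. \<not> P x x"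
  shows "distinct xs"
  using assms by (induction xs) auto

fun strand_less :: "(nat \<Rightarrow> nat) \<Rightarrow> strand \<Rightarrow> strand \<Rightarrow> bool" where
  "strand_less \<kappa> (Rd p) (Rd p') \<longleftrightarrow> \<kappa> p < \<kappa> p' \<or> \<kappa> p = \<kappa> p' \<and> p < p'"
| "strand_less \<kappa> (Rd p) (Blk k) \<longleftrightarrow> \<kappa> p < k"
| "strand_less \<kappa> (Blk k) (Rd p) \<longleftrightarrow> k \<le> \<kappa> p"
| "strand_less \<kappa> (Blk k) (Blk k') \<longleftrightarrow> k < k'"

lemma strand_less_asym: "strand_less \<kappa> s s' \<Longrightarrow> \<not> strand_less \<kappa> s' s"
  by (cases s; cases s') auto

lemma strand_less_irrefl: "\<not> strand_less \<kappa> s s"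
  by (cases s) auto

lemma sorted_strand_seq: "sorted_wrt (strand_less \<kappa>) (strand_seq n l \<kappa>)"
proof -
  define block where
    "block k = map Rd (filter (\<lambda>p. \<kappa> p = k) [1..<l+1]) @ (if k < n then [Blk (k+1)] else [])" for k
  have block_elems: "(\<exists>p. s = Rd p \<and> \<kappa> p = k) \<or> s = Blk (k + 1)" if "s \<in> set (block k)" for s k
    using that unfolding block_def by (auto split: if_splits)
  have "sorted_wrt (strand_less \<kappa>) (concat (map block [0..<n+1]))"
  proof (rule sorted_wrt_concat_map)
    fix k
    have "sorted_wrt (<) (filter (\<lambda>p. \<kappa> p = k) [1..<l+1])"
      by (intro sorted_wrt_filter sorted_wrt_upt)
    then have "sorted_wrt (strand_less \<kappa>) (map Rd (filter (\<lambda>p. \<kappa> p = k) [1..<l+1]))"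
      by (simp add: sorted_wrt_map del: upt_Suc)
        (erule sorted_wrt_mono_rel[rotated], auto simp del: upt_Suc)
    then show "sorted_wrt (strand_less \<kappa>) (block k)"
      unfolding block_def by (auto simp: sorted_wrt_append)
  next
    fix i j s s'
    assume "i < j" "j < length [0..<n+1]"
      and "s \<in> set (block ([0..<n+1] ! i))" "s' \<in> set (block ([0..<n+1] ! j))"
    then show "strand_less \<kappa> s s'"
      using block_elems[of s i] block_elems[of s' j] by (auto simp del: upt_Suc)
  qed
  then show ?thesis unfolding strand_seq_def block_def .
qed

lemma set_strand_seq:
  "set (strand_seq n l \<kappa>) = Blk ` {1..n} \<union> Rd ` {p. 1 \<le> p \<and> p \<le> l \<and> \<kappa> p \<le> n}"
  unfolding strand_seq_def
  apply (auto simp del: upt_Suc split: if_splits)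
  subgoal for k by (rule bexI[of _ "k - 1"]) auto
  subgoal for p by (rule bexI[of _ "\<kappa> p"]) auto
  done

lemma distinct_strand_seq: "distinct (strand_seq n l \<kappa>)"
  using sorted_strand_seq strand_less_irrefl by (rule sorted_wrt_irrefl_imp_distinct)

lemma strand_pos_nth:
  assumes "distinct xs" "i < length xs"
  shows "strand_pos xs (xs ! i) = i"
  unfolding strand_pos_def using assms by (intro Least_equality) (auto simp: nth_eq_iff_index_eq)

lemma strand_pos_in_set:
  assumes "s \<in> set xs"
  shows "strand_pos xs s < length xs" and "xs ! strand_pos xs s = s"
proof -
  have "\<exists>a. a < length xs \<and> xs ! a = s" using assms by (simp add: in_set_conv_nth)
  then have "strand_pos xs s < length xs \<and> xs ! strand_pos xs s = s"
    unfolding strand_pos_def by (rule LeastI_ex)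
  then show "strand_pos xs s < length xs" and "xs ! strand_pos xs s = s" by auto
qed

lemma odd_delta_consec_iff:
  "odd (delta_consec par is lab s s') \<longleftrightarrow> strand_par par is lab s \<noteq> strand_par par is lab s'"
  unfolding delta_consec_def by auto

lemma delta_consec_le_diff:
  fixes x y :: int
  assumes "odd x = strand_par par is lab s" "odd y = strand_par par is lab s'" "x \<le> y"
    and "\<And>k p. s = Blk k \<Longrightarrow> s' = Rd p \<Longrightarrow> x < y"
  shows "int (delta_consec par is lab s s') \<le> y - x"
proof (cases "(\<exists>k. s = Blk k) \<and> (\<exists>p. s' = Rd p)
    \<and> strand_par par is lab s = strand_par par is lab s'")
  case True
  then have "x < y" and "even (y - x)" using assms by auto
  then have "2 \<le> y - x" by presburger
  then show ?thesis using True unfolding delta_consec_def by simp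
next
  case False
  moreover have "x \<noteq> y" if "strand_par par is lab s \<noteq> strand_par par is lab s'"
    using that assms(1,2) by auto
  ultimately show ?thesis using assms(3) unfolding delta_consec_def by auto
qed

lemma delta_sum_pos_Blk_Rd:
  assumes "s b = Blk k" "s j = Rd p" "b < j"
  shows "0 < (\<Sum>x=b..<j. delta_consec par is lab (s x) (s (Suc x)))"
  using assms(2,3)
proof (induction j arbitrary: p)
  case (Suc j)
  show ?case
  proof (cases "s j")
    case (Blk k')
    then have "0 < delta_consec par is lab (s j) (s (Suc j))"
      using Suc.prems unfolding delta_consec_def by auto
    then show ?thesis using Suc.prems(2) by (simp add: sum.atLeastLessThan_Suc)
  next
    case (Rd p')
    then have "b < j" using Suc.prems assms(1) by (cases "b = j") auto
    then show ?thesis using Suc.IH[OF Rd] by (simp add: sum.atLeastLessThan_Suc)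
  qed
qed simp

section \<open>Red strands\<close>

lemma odd_red_list:
  "x \<in> set (red_list par vs R) \<Longrightarrow> odd (snd x) = par (fst x)"
  unfolding red_list_def Let_def by (auto simp: par_int_def split: if_splits)

lemma sorted_red_list:
  assumes "\<forall>a b. a < b \<and> b < length vs \<and> par (vs ! a) \<longrightarrow> par (vs ! b)"
  shows "sorted (map snd (red_list par vs R))"
proof -
  define N where "N = sum_list (map (\<lambda>v. sum_mset (image_mset abs (R v))) vs)"
  define lon where "lon q v = 2 * q + par_int (par v)" for q v
  define copies where "copies q v = replicate (count (R v) (lon q v)) (lon q v)" for q v
  define block where "block q = concat (map (copies q) vs)" for q
  have block_bounds: "2 * q \<le> x \<and> x \<le> 2 * q + 1" if "x \<in> set (block q)" for x q
    using that unfolding block_def copies_def lon_def by (auto simp: par_int_def)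
  have "sorted_wrt (\<le>) (concat (map block [-N..N]))"
  proof (rule sorted_wrt_concat_map)
    fix q
    show "sorted_wrt (\<le>) (block q)"
      unfolding block_def
    proof (rule sorted_wrt_concat_map)
      fix i j x y
      assume "i < j" "j < length vs" "x \<in> set (copies q (vs ! i))" "y \<in> set (copies q (vs ! j))"
      moreover have "par (vs ! i) \<longrightarrow> par (vs ! j)" using assms \<open>i < j\<close> \<open>j < length vs\<close> by auto
      ultimately show "x \<le> y" by (auto simp: copies_def lon_def par_int_def)
    qed (simp add: copies_def)
  next
    fix i j x y
    assume "i < j" "j < length [-N..N]"
      and "x \<in> set (block ([-N..N] ! i))" "y \<in> set (block ([-N..N] ! j))"
    then have "x \<in> set (block (-N + int i))" "y \<in> set (block (-N + int j))"
      by (simp_all add: nth_upto)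
    then have "x \<le> 2 * (-N + int i) + 1" "2 * (-N + int j) \<le> y"
      using block_bounds by blast+
    then show "x \<le> y" using \<open>i < j\<close> by simp
  qed
  moreover have "map snd (red_list par vs R) = concat (map block [-N..N])"
    unfolding red_list_def Let_def N_def[symmetric] block_def copies_def lon_def
    by (simp add: map_concat comp_def)
  ultimately show ?thesis by simp
qed

lemma sum_count_parity_class:
  fixes M :: "int multiset"
  assumes "\<forall>x\<in>#M. odd x = b" "\<forall>x\<in>#M. \<bar>x\<bar> \<le> N"
  shows "(\<Sum>q\<in>{-N..N}. count M (2 * q + par_int b)) = size M"
proof -
  let ?f = "\<lambda>q. 2 * q + par_int b"
  have "inj_on ?f {-N..N}" by (auto simp: inj_on_def)
  then have "(\<Sum>q\<in>{-N..N}. count M (?f q)) = (\<Sum>x\<in>?f ` {-N..N}. count M x)"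
    by (simp add: sum.reindex)
  also have "\<dots> = (\<Sum>x\<in>set_mset M. count M x)"
  proof (rule sum.mono_neutral_right)
    show "set_mset M \<subseteq> ?f ` {-N..N}"
    proof
      fix x assume "x \<in># M"
      then have "x = ?f ((x - par_int b) div 2)" "(x - par_int b) div 2 \<in> {-N..N}"
        using assms by (cases b; force simp: par_int_def elim!: oddE evenE)+
      then show "x \<in> ?f ` {-N..N}" by blast
    qed
  qed (auto simp: count_eq_zero_iff)
  also have "\<dots> = size M" by (simp add: size_multiset_overloaded_eq)
  finally show ?thesis .
qed

lemma sum_mset_abs_nonneg: "0 \<le> sum_mset (image_mset abs (M :: int multiset))"
  by (induction M) auto

lemma abs_le_sum_mset_abs: "x \<in># M \<Longrightarrow> \<bar>x\<bar> \<le> sum_mset (image_mset abs (M :: int multiset))"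
  by (induction M) (auto simp: add_increasing add_increasing2 sum_mset_abs_nonneg)

lemma length_red_list:
  assumes "distinct vs" "set vs = I" "\<forall>v\<in>I. \<forall>x\<in>#R v. odd x = par v"
  shows "length (red_list par vs R) = ell I R"
proof -
  define N where "N = sum_list (map (\<lambda>v. sum_mset (image_mset abs (R v))) vs)"
  have N_bound: "\<bar>x\<bar> \<le> N" if "v \<in> I" "x \<in># R v" for v x
  proof -
    have "\<bar>x\<bar> \<le> sum_mset (image_mset abs (R v))"
      using that(2) by (rule abs_le_sum_mset_abs)
    also have "\<dots> \<le> N" unfolding N_def
      using that(1) assms(2) by (intro member_le_sum_list) (auto intro: sum_mset_abs_nonneg)
    finally show ?thesis .
  qed
  have "length (red_list par vs R) = (\<Sum>q\<in>{-N..N}. \<Sum>v\<in>I. count (R v) (2 * q + par_int (par v)))"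
    unfolding red_list_def Let_def N_def[symmetric]
    by (simp add: length_concat comp_def sum_list_distinct_conv_sum_set assms)
  also have "\<dots> = (\<Sum>v\<in>I. \<Sum>q\<in>{-N..N}. count (R v) (2 * q + par_int (par v)))"
    by (rule sum.swap)
  also have "\<dots> = (\<Sum>v\<in>I. size (R v))"
    using assms(3) N_bound by (intro sum.cong refl sum_count_parity_class) auto
  finally show ?thesis by (simp add: ell_def)
qed

section \<open>Idempotent data\<close>

locale idempotent_datum =
  fixes I :: "'v set" and par :: "'v \<Rightarrow> bool" and vs :: "'v list" and R :: "'v \<Rightarrow> int multiset"
    and "is" :: "'v list" and \<kappa> :: "nat \<Rightarrow> nat"
  assumes distinct_vs: "distinct vs" and set_vs: "set vs = I"
    and even_before_odd: "\<forall>a b. a < b \<and> b < length vs \<and> par (vs ! a) \<longrightarrow> par (vs ! b)"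
    and R_parity: "\<forall>v\<in>I. \<forall>x\<in>#R v. odd x = par v"
    and \<kappa>_mono: "\<forall>p p'. 1 \<le> p \<and> p \<le> p' \<and> p' \<le> ell I R \<longrightarrow> \<kappa> p \<le> \<kappa> p'"
    and \<kappa>_le: "\<forall>p. 1 \<le> p \<and> p \<le> ell I R \<longrightarrow> \<kappa> p \<le> length is"
begin

definition strands :: "strand list" where
  "strands = strand_seq (length is) (ell I R) \<kappa>"

definition index_of :: "strand \<Rightarrow> nat" where
  "index_of = strand_pos strands"

definition gap :: "nat \<Rightarrow> nat" where
  "gap x = delta_consec par is (red_lab par vs R) (strands ! x) (strands ! Suc x)"

definition parity_at :: "nat \<Rightarrow> bool" where
  "parity_at x = strand_par par is (red_lab par vs R) (strands ! x)"

definition red_positions :: "nat set" where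
  "red_positions = {x. x < length strands \<and> (\<exists>p. strands ! x = Rd p)}"

definition strand_lon :: "int list \<Rightarrow> strand \<Rightarrow> int" where
  "strand_lon a s = (case s of Blk k \<Rightarrow> a ! (k - 1) | Rd p \<Rightarrow> red_lon par vs R p)"

text \<open>The list argument is irrelevant, because pinned_lon is only used at red positions.\<close>

definition pinned_lon :: "nat \<Rightarrow> int" where
  "pinned_lon x = strand_lon [] (strands ! x)"

lemma Blk_in_strands_iff: "Blk k \<in> set strands \<longleftrightarrow> 1 \<le> k \<and> k \<le> length is"
  unfolding strands_def set_strand_seq by auto

lemma Rd_in_strands_iff: "Rd p \<in> set strands \<longleftrightarrow> 1 \<le> p \<and> p \<le> ell I R"
  unfolding strands_def set_strand_seq using \<kappa>_le by auto

lemma index_of_less_length: "s \<in> set strands \<Longrightarrow> index_of s < length strands"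
  unfolding index_of_def by (rule strand_pos_in_set)

lemma nth_index_of: "s \<in> set strands \<Longrightarrow> strands ! index_of s = s"
  unfolding index_of_def by (rule strand_pos_in_set)

lemma index_of_nth: "i < length strands \<Longrightarrow> index_of (strands ! i) = i"
  unfolding index_of_def strands_def by (intro strand_pos_nth distinct_strand_seq)

lemma strand_less_nth: "i < j \<Longrightarrow> j < length strands \<Longrightarrow> strand_less \<kappa> (strands ! i) (strands ! j)"
  unfolding strands_def using sorted_strand_seq by (rule sorted_wrt_nth_less)

lemma index_of_less_iff:
  assumes "s \<in> set strands" "s' \<in> set strands"
  shows "index_of s < index_of s' \<longleftrightarrow> strand_less \<kappa> s s'"
proof (cases rule: linorder_cases[of "index_of s" "index_of s'"])
  case less
  then show ?thesis
    using strand_less_nth index_of_less_length[OF assms(2)] by (metis assms nth_index_of)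
next
  case equal
  then show ?thesis using strand_less_irrefl by (metis assms nth_index_of less_irrefl)
next
  case greater
  then have "strand_less \<kappa> s' s"
    using strand_less_nth index_of_less_length[OF assms(1)] by (metis assms nth_index_of)
  then show ?thesis using greater strand_less_asym by auto
qed

lemma strand_less_Rd_iff:
  assumes "1 \<le> p" "p \<le> ell I R" "1 \<le> p'" "p' \<le> ell I R"
  shows "strand_less \<kappa> (Rd p) (Rd p') \<longleftrightarrow> p < p'"
  using assms \<kappa>_mono[rule_format, of p p'] \<kappa>_mono[rule_format, of p' p]
  by (cases "p < p'") (auto simp: not_less)

lemma length_red_list_eq: "length (red_list par vs R) = ell I R"
  using distinct_vs set_vs R_parity by (rule length_red_list)

lemma red_lon_mono:
  assumes "1 \<le> p" "p \<le> p'" "p' \<le> ell I R"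
  shows "red_lon par vs R p \<le> red_lon par vs R p'"
proof -
  have "map snd (red_list par vs R) ! (p - 1) \<le> map snd (red_list par vs R) ! (p' - 1)"
    using sorted_red_list[OF even_before_odd] assms length_red_list_eq
    by (intro sorted_nth_mono) auto
  then show ?thesis using assms length_red_list_eq unfolding red_lon_def by simp
qed

lemma odd_red_lon:
  assumes "1 \<le> p" "p \<le> ell I R"
  shows "odd (red_lon par vs R p) = par (red_lab par vs R p)"
proof -
  have "red_list par vs R ! (p - 1) \<in> set (red_list par vs R)"
    using assms length_red_list_eq by simp
  then show ?thesis unfolding red_lon_def red_lab_def by (rule odd_red_list)
qed

lemma red_positions_eq: "red_positions = (\<lambda>p. index_of (Rd p)) ` {1..ell I R}"
proof
  show "red_positions \<subseteq> (\<lambda>p. index_of (Rd p)) ` {1..ell I R}"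
  proof
    fix x assume "x \<in> red_positions"
    then obtain p where "x < length strands" "strands ! x = Rd p"
      unfolding red_positions_def by blast
    then have "x = index_of (Rd p)" and "Rd p \<in> set strands"
      by (metis index_of_nth, metis nth_mem)
    then show "x \<in> (\<lambda>p. index_of (Rd p)) ` {1..ell I R}"
      by (auto simp: Rd_in_strands_iff)
  qed
  show "(\<lambda>p. index_of (Rd p)) ` {1..ell I R} \<subseteq> red_positions"
    unfolding red_positions_def using index_of_less_length nth_index_of Rd_in_strands_iff by auto
qed

lemma pinned_lon_index_of_Rd:
  "1 \<le> p \<Longrightarrow> p \<le> ell I R \<Longrightarrow> pinned_lon (index_of (Rd p)) = red_lon par vs R p"
  unfolding pinned_lon_def strand_lon_def by (simp add: nth_index_of Rd_in_strands_iff)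

lemma odd_pinned_lon:
  assumes "i \<in> red_positions"
  shows "odd (pinned_lon i) = parity_at i"
proof -
  obtain p where p: "1 \<le> p" "p \<le> ell I R" and "i = index_of (Rd p)"
    using assms unfolding red_positions_eq by auto
  then show ?thesis using odd_red_lon[OF p]
    by (simp add: pinned_lon_index_of_Rd parity_at_def nth_index_of Rd_in_strands_iff
        strand_par_def)
qed

lemma index_of_Rd_less_iff:
  "p \<in> {1..ell I R} \<Longrightarrow> p' \<in> {1..ell I R} \<Longrightarrow> index_of (Rd p) < index_of (Rd p') \<longleftrightarrow> p < p'"
  using strand_less_Rd_iff[of p p'] by (simp add: index_of_less_iff Rd_in_strands_iff)

lemma is_parity_datum_iff_feasible_pins:
  "is_parity_datum I par vs R is \<kappa> \<longleftrightarrow> feasible_pins gap red_positions pinned_lon"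
proof -
  have delta_red_eq: "delta_red par is (red_lab par vs R) (strand_seq (length is) (ell I R) \<kappa>) p p'
      = sum gap {index_of (Rd p)..<index_of (Rd p')}" for p p'
    unfolding delta_red_def gap_def index_of_def strands_def by simp
  have abs_eq:
    "\<bar>red_lon par vs R p - red_lon par vs R p'\<bar> = red_lon par vs R p' - red_lon par vs R p"
    if "p \<in> {1..ell I R}" "p' \<in> {1..ell I R}" "p < p'" for p p'
    using that red_lon_mono[of p p'] by simp
  show ?thesis
  proof
    assume parity: "is_parity_datum I par vs R is \<kappa>"
    show "feasible_pins gap red_positions pinned_lon"
      unfolding feasible_pins_def
    proof (intro ballI impI)
      fix i j assume "i \<in> red_positions" "j \<in> red_positions" "i < j"
      then obtain p p' where pp': "p \<in> {1..ell I R}" "p' \<in> {1..ell I R}"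
        and ij: "i = index_of (Rd p)" "j = index_of (Rd p')"
        unfolding red_positions_eq by blast
      with \<open>i < j\<close> have "p < p'" by (simp add: index_of_Rd_less_iff)
      then show "pinned_lon i + int (sum gap {i..<j}) \<le> pinned_lon j"
        using parity[unfolded is_parity_datum_def, rule_format, of p p'] pp' abs_eq[OF pp']
        unfolding delta_red_eq ij by (simp add: pinned_lon_index_of_Rd)
    qed
  next
    assume feasible: "feasible_pins gap red_positions pinned_lon"
    show "is_parity_datum I par vs R is \<kappa>"
      unfolding is_parity_datum_def
    proof (intro allI impI)
      fix p p' assume "1 \<le> p \<and> p < p' \<and> p' \<le> ell I R"
      then have pp': "p \<in> {1..ell I R}" "p' \<in> {1..ell I R}" "p < p'" by auto
      then have "index_of (Rd p) \<in> red_positions" "index_of (Rd p') \<in> red_positions"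
        and "index_of (Rd p) < index_of (Rd p')"
        unfolding red_positions_eq by (auto simp: index_of_Rd_less_iff)
      then show "int (delta_red par is (red_lab par vs R) (strand_seq (length is) (ell I R) \<kappa>) p p')
          \<le> \<bar>red_lon par vs R p - red_lon par vs R p'\<bar>"
        using feasible[unfolded feasible_pins_def, rule_format, of "index_of (Rd p)" "index_of (Rd p')"] pp' abs_eq[OF pp']
        unfolding delta_red_eq by (simp add: pinned_lon_index_of_Rd)
    qed
  qed
qed

lemma compatible_longitude_sorted:
  "compatible_longitude I par vs R is \<kappa> a \<Longrightarrow> sorted a"
  unfolding compatible_longitude_def sorted_iff_nth_Suc by simp

lemma odd_strand_lon:
  assumes "compatible_longitude I par vs R is \<kappa> a" "s \<in> set strands"
  shows "odd (strand_lon a s) = strand_par par is (red_lab par vs R) s"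
proof (cases s)
  case (Blk k)
  then have "k - 1 < length is" using assms(2) by (auto simp: Blk_in_strands_iff)
  then show ?thesis using Blk assms(1) unfolding compatible_longitude_def
    by (simp add: strand_lon_def strand_par_def)
next
  case (Rd p)
  then show ?thesis using assms(2) odd_red_lon
    by (auto simp: Rd_in_strands_iff strand_lon_def strand_par_def)
qed

lemma strand_lon_mono:
  assumes a: "compatible_longitude I par vs R is \<kappa> a"
    and "s \<in> set strands" "s' \<in> set strands" "strand_less \<kappa> s s'"
  shows "strand_lon a s \<le> strand_lon a s'"
    and "s = Blk k \<Longrightarrow> s' = Rd p \<Longrightarrow> strand_lon a s < strand_lon a s'"
proof -
  have sep: "red_lon par vs R p \<le> a ! (k - 1) \<longleftrightarrow> \<kappa> p < k"
    if "Blk k \<in> set strands" "Rd p \<in> set strands" for k p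
    using a that unfolding compatible_longitude_def
    by (simp add: Blk_in_strands_iff Rd_in_strands_iff)
  show "strand_lon a s \<le> strand_lon a s'"
  proof (cases s; cases s')
    fix k k' assume "s = Blk k" "s' = Blk k'"
    then show ?thesis
      using assms compatible_longitude_sorted[OF a] unfolding compatible_longitude_def
      by (auto simp: strand_lon_def Blk_in_strands_iff intro: sorted_nth_mono)
  next
    fix k p assume "s = Blk k" "s' = Rd p"
    then show ?thesis using assms sep[of k p] by (simp add: strand_lon_def)
  next
    fix p k assume "s = Rd p" "s' = Blk k"
    then show ?thesis using assms sep[of k p] by (simp add: strand_lon_def)
  next
    fix p p' assume "s = Rd p" "s' = Rd p'"
    then show ?thesis
      using assms strand_less_Rd_iff[of p p'] red_lon_mono[of p p']
      by (simp add: strand_lon_def Rd_in_strands_iff)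
  qed
  show "strand_lon a s < strand_lon a s'" if "s = Blk k" "s' = Rd p"
    using that assms sep[of k p] by (simp add: strand_lon_def)
qed

lemma pinned_potential_of_compatible:
  assumes a: "compatible_longitude I par vs R is \<kappa> a"
  shows "pinned_potential (length strands) gap parity_at red_positions pinned_lon
    (\<lambda>x. strand_lon a (strands ! x))"
  unfolding pinned_potential_def
proof (intro conjI allI impI ballI)
  fix x assume "Suc x < length strands"
  then have mem: "strands ! x \<in> set strands" "strands ! Suc x \<in> set strands"
    and less: "strand_less \<kappa> (strands ! x) (strands ! Suc x)"
    by (auto intro: strand_less_nth)
  show "strand_lon a (strands ! x) + int (gap x) \<le> strand_lon a (strands ! Suc x)"
    unfolding gap_def
    using delta_consec_le_diff[OF odd_strand_lon[OF a mem(1)] odd_strand_lon[OF a mem(2)]]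
      strand_lon_mono[OF a mem less] by auto
next
  fix i assume "i \<in> red_positions"
  then show "strand_lon a (strands ! i) = pinned_lon i"
    unfolding red_positions_def pinned_lon_def strand_lon_def by auto
next
  fix x assume "x < length strands"
  then show "odd (strand_lon a (strands ! x)) = parity_at x"
    unfolding parity_at_def by (simp add: odd_strand_lon[OF a])
qed

lemma compatible_of_pinned_potential:
  assumes f: "pinned_potential (length strands) gap parity_at red_positions pinned_lon f"
  shows "compatible_longitude I par vs R is \<kappa> (map (\<lambda>k. f (index_of (Blk (Suc k)))) [0..<length is])"
    (is "compatible_longitude _ _ _ _ _ _ ?a")
proof -
  have f_increments: "f i + int (sum gap {i..<j}) \<le> f j" if "i \<le> j" "j < length strands" for i j
    using f that by (intro sum_le_of_increments) (auto simp: pinned_potential_def)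
  have f_mono: "f (index_of s) \<le> f (index_of s')"
    if "s \<in> set strands" "s' \<in> set strands" "strand_less \<kappa> s s'" for s s'
  proof -
    have "index_of s < index_of s'" using that by (simp add: index_of_less_iff)
    then show ?thesis
      using f_increments[of "index_of s" "index_of s'"] index_of_less_length[OF that(2)] by linarith
  qed
  have f_Blk_less_Rd: "f (index_of (Blk k)) < f (index_of (Rd p))"
    if "Blk k \<in> set strands" "Rd p \<in> set strands" "k \<le> \<kappa> p" for k p
  proof -
    have "index_of (Blk k) < index_of (Rd p)" using that by (simp add: index_of_less_iff)
    then have "0 < sum gap {index_of (Blk k)..<index_of (Rd p)}"
      unfolding gap_def using that by (intro delta_sum_pos_Blk_Rd) (auto simp: nth_index_of)
    then show ?thesis
      using f_increments[of "index_of (Blk k)" "index_of (Rd p)"] that index_of_less_length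
        \<open>index_of (Blk k) < index_of (Rd p)\<close> by (simp del: of_nat_sum)
  qed
  have f_Rd: "f (index_of (Rd p)) = red_lon par vs R p" if "Rd p \<in> set strands" for p
    using f that unfolding pinned_potential_def red_positions_eq
    by (simp add: Rd_in_strands_iff pinned_lon_index_of_Rd)
  have a_nth: "?a ! (k - 1) = f (index_of (Blk k))" if "Blk k \<in> set strands" for k
    using that by (auto simp: Blk_in_strands_iff)
  show ?thesis
    unfolding compatible_longitude_def
  proof (intro conjI allI impI)
    fix k assume "k < length is"
    then have k: "Blk (Suc k) \<in> set strands" by (simp add: Blk_in_strands_iff)
    then have "odd (f (index_of (Blk (Suc k)))) = parity_at (index_of (Blk (Suc k)))"
      using f index_of_less_length unfolding pinned_potential_def by blast
    then show "odd (?a ! k) = par (is ! k)"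
      using a_nth[OF k] nth_index_of[OF k] by (simp add: parity_at_def strand_par_def)
  next
    fix k assume "k + 1 < length is"
    then have "Blk (Suc k) \<in> set strands" "Blk (Suc (Suc k)) \<in> set strands"
      by (simp_all add: Blk_in_strands_iff)
    then show "?a ! k \<le> ?a ! (k + 1)"
      using f_mono a_nth[of "Suc k"] a_nth[of "Suc (Suc k)"] by simp
  next
    fix k p assume "1 \<le> k \<and> k \<le> length is \<and> 1 \<le> p \<and> p \<le> ell I R"
    then have k: "Blk k \<in> set strands" and p: "Rd p \<in> set strands"
      by (simp_all add: Blk_in_strands_iff Rd_in_strands_iff)
    show "red_lon par vs R p \<le> ?a ! (k - 1) \<longleftrightarrow> \<kappa> p < k"
      using f_mono[OF p k] f_Blk_less_Rd[OF k p] f_Rd[OF p] a_nth[OF k] by (cases "\<kappa> p < k") auto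
  qed simp
qed

lemma compatible_longitude_iff_pinned_potential:
  "(\<exists>a. compatible_longitude I par vs R is \<kappa> a) \<longleftrightarrow>
    (\<exists>f. pinned_potential (length strands) gap parity_at red_positions pinned_lon f)"
  using pinned_potential_of_compatible compatible_of_pinned_potential by blast

end

theorem lemma3p25:
  fixes I :: "'v set" and E :: "('v \<times> 'v) set" and par :: "'v \<Rightarrow> bool"
    and vs :: "'v list" and R :: "'v \<Rightarrow> int multiset"
    and "is" :: "'v list" and \<kappa> :: "nat \<Rightarrow> nat"
  assumes "finite I"
    and "E \<subseteq> I \<times> I" and "sym E" and "irrefl E"
    and "\<forall>(u, v)\<in>E. par u \<noteq> par v"
    and "distinct vs" and "set vs = I"
    and "\<forall>a b. a < b \<and> b < length vs \<and> par (vs ! a) \<longrightarrow> par (vs ! b)"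
    and "\<forall>v\<in>I. \<forall>x\<in>#R v. odd x = par v"
    and "set is \<subseteq> I"
    and "\<forall>p p'. 1 \<le> p \<and> p \<le> p' \<and> p' \<le> ell I R \<longrightarrow> \<kappa> p \<le> \<kappa> p'"
    and "\<forall>p. 1 \<le> p \<and> p \<le> ell I R \<longrightarrow> \<kappa> p \<le> length is"
  shows "(\<exists>a. compatible_longitude I par vs R is \<kappa> a) \<longleftrightarrow> is_parity_datum I par vs R is \<kappa>"
proof -
  interpret idempotent_datum I par vs R "is" \<kappa>
    using assms(6-9,11,12) by unfold_locales
  have "red_positions \<subseteq> {..<length strands}"
    unfolding red_positions_def by auto
  moreover have "odd (gap x) \<longleftrightarrow> parity_at x \<noteq> parity_at (Suc x)" for x
    unfolding gap_def parity_at_def by (rule odd_delta_consec_iff)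
  moreover note odd_pinned_lon
  ultimately show ?thesis
    unfolding compatible_longitude_iff_pinned_potential is_parity_datum_iff_feasible_pins
    by (rule pinned_potential_exists_iff)
qed

end
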